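(* Let $G$ be a fully supported graph, and let $\mathcal{H}$ be the family of graphs $H=(\{v_1,v_2\},\beta)$ with $\beta(v_1,v_2)=\beta(v_2,v_1)=0$ and $\beta(v_1,v_1)>0$, $\beta(v_2,v_2)>0$ (two isolated vertices each with a self-loop of positive weight). The following are equivalent: (1) $G$ is connected; (2) $G$ is strongly disjoint from some $H\in\mathcal{H}$; (3) $G$ is strongly disjoint from every $H\in\mathcal{H}$.
   Context: A weight function on finite $U$ is $\alpha:U\times U\to\mathbb{R}$, $\alpha\ge0$, symmetric, summing to $1$; degree $p(u)=\sum_{u'}\alpha(u,u')$; a graph is $(U,\alpha)$ with edges $(u,u')$ where $\alpha(u,u')>0$; fully supported means $p(u)>0$ for all $u$; connected means any two distinct vertices are joined by a path of edges. For graphs $(U,\alpha)$, $(V,\beta)$ with degrees $p,q$, a weight joining is a weight function $\gamma$ on $U\times V$ with degree $r(u,v)=\sum_{(u',v')}\gamma((u,v),(u',v'))$ such that $\sum_v r(u,v)=p(u)$, $\sum_u r(u,v)=q(v)$, $p(u)\sum_{\tilde v}\gamma((u,v),(u',\tilde v))=\alpha(u,u')r(u,v)$ and $q(v)\sum_{\tilde u}\gamma((u,v),(\tilde u,v'))=\beta(v,v')r(u,v)$ for all $u,u',v,v'$. The graphs are strongly disjoint if the only weight joining is $\alpha\otimes\beta$, $(\alpha\otimes\beta)((u,v),(u',v'))=\alpha(u,u')\beta(v,v')$. *)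

theory Defs
  imports Complex_Main
begin

definition weight_fun :: "('a::finite \<Rightarrow> 'a \<Rightarrow> real) \<Rightarrow> bool" where
  "weight_fun \<alpha> \<longleftrightarrow> (\<forall>x y. 0 \<le> \<alpha> x y) \<and> (\<forall>x y. \<alpha> x y = \<alpha> y x)
     \<and> (\<Sum>x\<in>UNIV. \<Sum>y\<in>UNIV. \<alpha> x y) = 1"

definition deg :: "('a::finite \<Rightarrow> 'a \<Rightarrow> real) \<Rightarrow> 'a \<Rightarrow> real" where
  "deg \<alpha> u = (\<Sum>u'\<in>UNIV. \<alpha> u u')"

definition fully_supported :: "('a::finite \<Rightarrow> 'a \<Rightarrow> real) \<Rightarrow> bool" where
  "fully_supported \<alpha> \<longleftrightarrow> (\<forall>u. 0 < deg \<alpha> u)"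

definition graph_connected :: "('a::finite \<Rightarrow> 'a \<Rightarrow> real) \<Rightarrow> bool" where
  "graph_connected \<alpha> \<longleftrightarrow> (\<forall>u u'. u \<noteq> u' \<longrightarrow> (\<lambda>x y. 0 < \<alpha> x y)\<^sup>+\<^sup>+ u u')"

definition tensor :: "('a \<Rightarrow> 'a \<Rightarrow> real) \<Rightarrow> ('b \<Rightarrow> 'b \<Rightarrow> real) \<Rightarrow> ('a \<times> 'b) \<Rightarrow> ('a \<times> 'b) \<Rightarrow> real" where
  "tensor \<alpha> \<beta> x y = \<alpha> (fst x) (fst y) * \<beta> (snd x) (snd y)"

definition weight_joining ::
  "('a::finite \<Rightarrow> 'a \<Rightarrow> real) \<Rightarrow> ('b::finite \<Rightarrow> 'b \<Rightarrow> real) \<Rightarrow> (('a \<times> 'b) \<Rightarrow> ('a \<times> 'b) \<Rightarrow> real) \<Rightarrow> bool" where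
  "weight_joining \<alpha> \<beta> \<gamma> \<longleftrightarrow> weight_fun \<gamma>
     \<and> (\<forall>u. (\<Sum>v\<in>UNIV. deg \<gamma> (u, v)) = deg \<alpha> u)
     \<and> (\<forall>v. (\<Sum>u\<in>UNIV. deg \<gamma> (u, v)) = deg \<beta> v)
     \<and> (\<forall>u u' v. deg \<alpha> u * (\<Sum>v'\<in>UNIV. \<gamma> (u, v) (u', v')) = \<alpha> u u' * deg \<gamma> (u, v))
     \<and> (\<forall>u v v'. deg \<beta> v * (\<Sum>u'\<in>UNIV. \<gamma> (u, v) (u', v')) = \<beta> v v' * deg \<gamma> (u, v))"

definition strongly_disjoint ::
  "('a::finite \<Rightarrow> 'a \<Rightarrow> real) \<Rightarrow> ('b::finite \<Rightarrow> 'b \<Rightarrow> real) \<Rightarrow> bool" where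
  "strongly_disjoint \<alpha> \<beta> \<longleftrightarrow> (\<forall>\<gamma>. weight_joining \<alpha> \<beta> \<gamma> \<longrightarrow> \<gamma> = tensor \<alpha> \<beta>)"

definition in_family_H :: "(bool \<Rightarrow> bool \<Rightarrow> real) \<Rightarrow> bool" where
  "in_family_H \<beta> \<longleftrightarrow> weight_fun \<beta> \<and> \<beta> True False = 0 \<and> \<beta> False True = 0
     \<and> 0 < \<beta> True True \<and> 0 < \<beta> False False"

end

theory Submission
  imports Defs
begin

text \<open>
  A joining of \<alpha> with a graph \<beta> made of isolated self-loops lives on the layers \<open>v = v'\<close>,
  and on layer \<open>v\<close> it has the form \<open>\<alpha>(u,u') h\<^sub>v(u)\<close>. Symmetry makes \<open>h\<^sub>v\<close> constant along
  the edges of \<alpha>, hence constant when \<alpha> is connected, and the marginal condition pins the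
  constant down to \<open>\<beta>(v,v)\<close>, so the joining is \<open>\<alpha> \<otimes> \<beta>\<close>.
  If \<alpha> is disconnected, split its vertices into a union \<open>S\<close> of components and the rest, and
  let \<open>g\<close> be constant on both parts with mean zero for the degree distribution. Reweighting
  one layer by \<open>\<beta>(v\<^sub>1,v\<^sub>1) + c g\<close> and another by \<open>\<beta>(v\<^sub>2,v\<^sub>2) - c g\<close> yields a second joining.
\<close>

definition diagonal :: "('b \<Rightarrow> 'b \<Rightarrow> real) \<Rightarrow> bool" where
  "diagonal \<beta> \<longleftrightarrow> (\<forall>v v'. v \<noteq> v' \<longrightarrow> \<beta> v v' = 0)"

lemma deg_diagonal: "diagonal \<beta> \<Longrightarrow> deg \<beta> v = \<beta> v v"
  unfolding diagonal_def deg_def by (subst sum.remove[of _ v]) auto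

lemma sum_deg: "weight_fun \<alpha> \<Longrightarrow> (\<Sum>u\<in>UNIV. deg \<alpha> u) = 1"
  unfolding weight_fun_def deg_def by simp

lemma fully_supported_has_neighbour:
  assumes "fully_supported \<alpha>"
  obtains u' where "\<alpha> u u' \<noteq> 0"
  using assms unfolding fully_supported_def deg_def by (metis less_irrefl sum.neutral)

lemma in_family_H_iff:
  "in_family_H \<beta> \<longleftrightarrow> weight_fun \<beta> \<and> diagonal \<beta> \<and> fully_supported \<beta>"
proof -
  have "diagonal \<beta> \<longleftrightarrow> \<beta> True False = 0 \<and> \<beta> False True = 0"
    unfolding diagonal_def by (metis (full_types))
  moreover have "fully_supported \<beta> \<longleftrightarrow> 0 < \<beta> True True \<and> 0 < \<beta> False False"
    if "diagonal \<beta>"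
    unfolding fully_supported_def deg_diagonal[OF that] by (metis (full_types))
  ultimately show ?thesis
    unfolding in_family_H_def by blast
qed

lemma connected_edge_invariant_const:
  assumes "graph_connected \<alpha>" and "\<And>u u'. 0 < \<alpha> u u' \<Longrightarrow> h u = h u'"
  shows "h u = h u'"
proof (cases "u = u'")
  case False
  then have "(\<lambda>x y. 0 < \<alpha> x y)\<^sup>+\<^sup>+ u u'"
    using assms(1) unfolding graph_connected_def by blast
  then show ?thesis
    by (induction rule: tranclp_induct) (use assms(2) in auto)
qed simp

lemma weight_joining_diagonal_off_layer:
  assumes J: "weight_joining \<alpha> \<beta> \<gamma>" and "diagonal \<beta>" "fully_supported \<beta>" and "v \<noteq> v'"
  shows "\<gamma> (u, v) (u', v') = 0"
proof -
  have "deg \<beta> v * (\<Sum>u''\<in>UNIV. \<gamma> (u, v) (u'', v')) = \<beta> v v' * deg \<gamma> (u, v)"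
    using J unfolding weight_joining_def by blast
  moreover have "\<beta> v v' = 0"
    using assms(2,4) unfolding diagonal_def by blast
  moreover have "deg \<beta> v \<noteq> 0"
    using assms(3) unfolding fully_supported_def by (metis less_irrefl)
  ultimately have "(\<Sum>u''\<in>UNIV. \<gamma> (u, v) (u'', v')) = 0"
    by simp
  moreover have "\<forall>x y. 0 \<le> \<gamma> x y"
    using J unfolding weight_joining_def weight_fun_def by blast
  ultimately show ?thesis
    using sum_nonneg_eq_0_iff[of UNIV "\<lambda>u''. \<gamma> (u, v) (u'', v')"] by simp
qed

lemma weight_joining_diagonal_layer:
  assumes J: "weight_joining \<alpha> \<beta> \<gamma>" and "diagonal \<beta>" "fully_supported \<beta>"
  shows "deg \<alpha> u * \<gamma> (u, v) (u', v) = \<alpha> u u' * deg \<gamma> (u, v)"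
proof -
  have "(\<Sum>v'\<in>UNIV. \<gamma> (u, v) (u', v')) = \<gamma> (u, v) (u', v)"
    using weight_joining_diagonal_off_layer[OF assms] by (subst sum.remove[of _ v]) auto
  then show ?thesis
    using J unfolding weight_joining_def by metis
qed

lemma strongly_disjoint_if_connected:
  assumes \<alpha>: "weight_fun \<alpha>" "fully_supported \<alpha>" "graph_connected \<alpha>"
    and \<beta>: "diagonal \<beta>" "fully_supported \<beta>"
  shows "strongly_disjoint \<alpha> \<beta>"
  unfolding strongly_disjoint_def
proof (intro allI impI)
  fix \<gamma> assume J: "weight_joining \<alpha> \<beta> \<gamma>"
  have p_pos: "0 < deg \<alpha> u" for u
    using \<alpha>(2) unfolding fully_supported_def by blast
  define h where "h v u = deg \<gamma> (u, v) / deg \<alpha> u" for v u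
  have deg_\<gamma>: "deg \<gamma> (u, v) = deg \<alpha> u * h v u" for u v
    using p_pos[of u] unfolding h_def by simp
  have layer: "\<gamma> (u, v) (u', v) = \<alpha> u u' * h v u" for u v u'
    using weight_joining_diagonal_layer[OF J \<beta>, of u v u'] p_pos[of u]
    unfolding h_def by (simp add: field_simps)
  have "h v u = h v u'" if "0 < \<alpha> u u'" for v u u'
  proof -
    have "\<gamma> (u, v) (u', v) = \<gamma> (u', v) (u, v)" and "\<alpha> u u' = \<alpha> u' u"
      using J \<alpha>(1) unfolding weight_joining_def weight_fun_def by blast+
    with that show ?thesis
      unfolding layer by simp
  qed
  then have h_const: "h v u = h v u'" for v u u'
    using connected_edge_invariant_const[OF \<alpha>(3)] by blast
  have h_eq: "h v u = \<beta> v v" for v u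
  proof -
    have "\<beta> v v = (\<Sum>x\<in>UNIV. deg \<gamma> (x, v))"
      using J deg_diagonal[OF \<beta>(1)] unfolding weight_joining_def by metis
    also have "\<dots> = (\<Sum>x\<in>UNIV. deg \<alpha> x) * h v u"
      unfolding deg_\<gamma> sum_distrib_right using h_const by metis
    finally show ?thesis
      using sum_deg[OF \<alpha>(1)] by simp
  qed
  show "\<gamma> = tensor \<alpha> \<beta>"
  proof (intro ext)
    fix x y :: "'a \<times> 'b"
    obtain u v u' v' where xy: "x = (u, v)" "y = (u', v')"
      by fastforce
    show "\<gamma> x y = tensor \<alpha> \<beta> x y"
    proof (cases "v = v'")
      case True
      then show ?thesis
        using layer h_eq unfolding xy tensor_def by simp
    next
      case False
      then show ?thesis
        using weight_joining_diagonal_off_layer[OF J \<beta>] \<beta>(1)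
        unfolding xy tensor_def diagonal_def by simp
    qed
  qed
qed

definition layered :: "('a \<Rightarrow> 'a \<Rightarrow> real) \<Rightarrow> ('b \<Rightarrow> 'a \<Rightarrow> real) \<Rightarrow> ('a \<times> 'b) \<Rightarrow> ('a \<times> 'b) \<Rightarrow> real"
  where "layered \<alpha> f x y = (if snd x = snd y then \<alpha> (fst x) (fst y) * f (snd x) (fst x) else 0)"

lemma deg_layered: "deg (layered \<alpha> f) (u, v) = deg \<alpha> u * f v u"
proof -
  have "deg (layered \<alpha> f) (u, v) = (\<Sum>(u', v')\<in>UNIV \<times> UNIV. layered \<alpha> f (u, v) (u', v'))"
    unfolding deg_def UNIV_Times_UNIV by (simp add: case_prod_beta)
  also have "\<dots> = (\<Sum>u'\<in>UNIV. \<alpha> u u' * f v u)"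
    unfolding sum.cartesian_product[symmetric] layered_def by simp
  finally show ?thesis
    unfolding deg_def sum_distrib_right .
qed

lemma weight_joining_layered:
  assumes \<alpha>: "weight_fun \<alpha>" and \<beta>: "diagonal \<beta>"
    and f_nonneg: "\<And>v u. 0 \<le> f v u"
    and f_invariant: "\<And>u u' v. \<alpha> u u' \<noteq> 0 \<Longrightarrow> f v u = f v u'"
    and f_partition: "\<And>u. (\<Sum>v\<in>UNIV. f v u) = 1"
    and f_marginal: "\<And>v. (\<Sum>u\<in>UNIV. deg \<alpha> u * f v u) = \<beta> v v"
  shows "weight_joining \<alpha> \<beta> (layered \<alpha> f)"
proof -
  have \<alpha>_nonneg: "0 \<le> \<alpha> u u'" and \<alpha>_sym: "\<alpha> u u' = \<alpha> u' u" for u u'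
    using \<alpha> unfolding weight_fun_def by blast+
  have first_marginal: "(\<Sum>v\<in>UNIV. deg (layered \<alpha> f) (u, v)) = deg \<alpha> u" for u
    unfolding deg_layered sum_distrib_left[symmetric] f_partition by simp
  have "(\<Sum>x\<in>UNIV. deg (layered \<alpha> f) x) = (\<Sum>u\<in>UNIV. \<Sum>v\<in>UNIV. deg (layered \<alpha> f) (u, v))"
    unfolding sum.cartesian_product UNIV_Times_UNIV[symmetric] by (simp add: case_prod_beta)
  then have total: "(\<Sum>x\<in>UNIV. \<Sum>y\<in>UNIV. layered \<alpha> f x y) = 1"
    using sum_deg[OF \<alpha>] unfolding first_marginal by (simp add: deg_def)
  have sym: "layered \<alpha> f (u, v) (u', v') = layered \<alpha> f (u', v') (u, v)" for u v u' v'
    using f_invariant[of u u' v] \<alpha>_sym[of u u'] unfolding layered_def by auto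
  have "weight_fun (layered \<alpha> f)"
    unfolding weight_fun_def using sym[unfolded split_paired_all] total \<alpha>_nonneg f_nonneg
    by (simp add: layered_def)
  moreover have "deg \<alpha> u * (\<Sum>v'\<in>UNIV. layered \<alpha> f (u, v) (u', v'))
      = \<alpha> u u' * deg (layered \<alpha> f) (u, v)" for u u' v
    unfolding deg_layered layered_def by (simp add: if_distrib)
  moreover have "deg \<beta> v * (\<Sum>u'\<in>UNIV. layered \<alpha> f (u, v) (u', v'))
      = \<beta> v v' * deg (layered \<alpha> f) (u, v)" for u v v'
  proof (cases "v = v'")
    case True
    then have "(\<Sum>u'\<in>UNIV. layered \<alpha> f (u, v) (u', v')) = deg \<alpha> u * f v u"
      unfolding layered_def deg_def by (simp add: sum_distrib_right)
    then show ?thesis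
      using True by (simp add: deg_layered deg_diagonal[OF \<beta>])
  next
    case False
    then show ?thesis
      using \<beta> unfolding layered_def diagonal_def by simp
  qed
  ultimately show ?thesis
    unfolding weight_joining_def using first_marginal f_marginal
    by (simp add: deg_layered deg_diagonal[OF \<beta>])
qed

lemma not_connected_obtains_invariant_function:
  assumes \<alpha>: "weight_fun \<alpha>" "fully_supported \<alpha>" and "\<not> graph_connected \<alpha>"
  obtains g where "\<And>u u'. \<alpha> u u' \<noteq> 0 \<Longrightarrow> g u = g u'"
    and "(\<Sum>u\<in>UNIV. deg \<alpha> u * g u) = 0" and "\<And>u. \<bar>g u\<bar> \<le> 1" and "\<And>u. g u \<noteq> 0"
proof -
  let ?R = "\<lambda>x y. 0 < \<alpha> x y"
  obtain u0 u1 where "\<not> ?R\<^sup>+\<^sup>+ u0 u1" "u0 \<noteq> u1"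
    using assms(3) unfolding graph_connected_def by blast
  define S where "S = {x. ?R\<^sup>*\<^sup>* u0 x}"
  have "u0 \<in> S" "u1 \<notin> S"
    using \<open>\<not> ?R\<^sup>+\<^sup>+ u0 u1\<close> \<open>u0 \<noteq> u1\<close> unfolding S_def by (auto dest: rtranclpD)
  have S_closed: "x \<in> S \<longleftrightarrow> y \<in> S" if "\<alpha> x y \<noteq> 0" for x y
  proof -
    have "?R x y" "?R y x"
      using that \<alpha>(1) unfolding weight_fun_def by (metis order_le_less)+
    then show ?thesis
      unfolding S_def by (auto intro: rtranclp.rtrancl_into_rtrancl)
  qed
  have p_pos: "0 < deg \<alpha> u" for u
    using \<alpha>(2) unfolding fully_supported_def by blast
  define P where "P = (\<Sum>u\<in>S. deg \<alpha> u)"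
  define Q where "Q = (\<Sum>u\<in>-S. deg \<alpha> u)"
  have "P + Q = 1"
    using sum_deg[OF \<alpha>(1)] sum.If_cases[where P = "\<lambda>u. u \<in> S" and h = "deg \<alpha>"
        and g = "deg \<alpha>" and A = UNIV]
    unfolding P_def Q_def by simp
  moreover have "deg \<alpha> u0 \<le> P" "deg \<alpha> u1 \<le> Q"
    unfolding P_def Q_def using \<open>u0 \<in> S\<close> \<open>u1 \<notin> S\<close> p_pos
    by (auto intro!: member_le_sum simp: less_imp_le)
  ultimately have PQ: "0 < P" "0 < Q" "P + Q = 1"
    using p_pos[of u0] p_pos[of u1] by auto
  define g where "g u = (if u \<in> S then Q else - P)" for u
  show thesis
  proof
    show "g u = g u'" if "\<alpha> u u' \<noteq> 0" for u u'
      using S_closed[OF that] unfolding g_def by simp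
    have "(\<Sum>u\<in>UNIV. deg \<alpha> u * g u)
        = (\<Sum>u\<in>UNIV. if u \<in> S then deg \<alpha> u * Q else deg \<alpha> u * - P)"
      unfolding g_def by (rule sum.cong) simp_all
    also have "\<dots> = P * Q - Q * P"
      unfolding sum.If_cases[OF finite] P_def Q_def sum_distrib_right by (simp add: sum_negf)
    finally show "(\<Sum>u\<in>UNIV. deg \<alpha> u * g u) = 0"
      by simp
    show "\<bar>g u\<bar> \<le> 1" "g u \<noteq> 0" for u
      using PQ unfolding g_def by auto
  qed
qed

lemma not_strongly_disjoint_if_not_connected:
  fixes \<beta> :: "'b::finite \<Rightarrow> 'b \<Rightarrow> real" and v1 v2 :: 'b
  assumes \<alpha>: "weight_fun \<alpha>" "fully_supported \<alpha>" "\<not> graph_connected \<alpha>"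
    and \<beta>: "weight_fun \<beta>" "diagonal \<beta>" "fully_supported \<beta>" and "v1 \<noteq> v2"
  shows "\<not> strongly_disjoint \<alpha> \<beta>"
proof -
  obtain g where g_invariant: "\<And>u u'. \<alpha> u u' \<noteq> 0 \<Longrightarrow> g u = g u'"
    and g_mean: "(\<Sum>u\<in>UNIV. deg \<alpha> u * g u) = 0"
    and g_bound: "\<And>u. \<bar>g u\<bar> \<le> 1" and g_nonzero: "\<And>u. g u \<noteq> 0"
    using not_connected_obtains_invariant_function[OF \<alpha>] by blast
  have q_pos: "0 < \<beta> v v" for v
    using \<beta>(2,3) deg_diagonal unfolding fully_supported_def by metis
  define c where "c = min (\<beta> v1 v1) (\<beta> v2 v2)"
  define e :: "'b \<Rightarrow> real" where "e v = of_bool (v = v1) - of_bool (v = v2)" for v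
  define f where "f v u = \<beta> v v + c * e v * g u" for v u
  have "c > 0"
    using q_pos unfolding c_def by simp
  have "0 \<le> f v u" for v u
  proof -
    have "\<bar>c * g u\<bar> \<le> c"
      using g_bound[of u] \<open>c > 0\<close> by (simp add: abs_mult mult_left_le)
    moreover have "c \<le> \<beta> v1 v1" "c \<le> \<beta> v2 v2"
      unfolding c_def by simp_all
    ultimately show ?thesis
      using q_pos[of v] \<open>v1 \<noteq> v2\<close> unfolding f_def e_def by (auto simp: abs_le_iff)
  qed
  moreover have "f v u = f v u'" if "\<alpha> u u' \<noteq> 0" for u u' v
    using g_invariant[OF that] unfolding f_def by simp
  moreover have "(\<Sum>v\<in>UNIV. f v u) = 1" for u
  proof -
    have "(\<Sum>v\<in>UNIV. \<beta> v v) = 1"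
      using sum_deg[OF \<beta>(1)] deg_diagonal[OF \<beta>(2)] by simp
    moreover have "(\<Sum>v\<in>UNIV. e v) = 0"
      unfolding e_def by (simp add: sum_subtractf)
    ultimately show ?thesis
      unfolding f_def sum.distrib sum_distrib_right[symmetric] sum_distrib_left[symmetric]
      by simp
  qed
  moreover have "(\<Sum>u\<in>UNIV. deg \<alpha> u * f v u) = \<beta> v v" for v
  proof -
    have "(\<Sum>u\<in>UNIV. deg \<alpha> u * f v u)
        = \<beta> v v * (\<Sum>u\<in>UNIV. deg \<alpha> u) + c * e v * (\<Sum>u\<in>UNIV. deg \<alpha> u * g u)"
      unfolding f_def by (simp add: sum.distrib sum_distrib_left algebra_simps)
    then show ?thesis
      using sum_deg[OF \<alpha>(1)] g_mean by simp
  qed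
  ultimately have "weight_joining \<alpha> \<beta> (layered \<alpha> f)"
    using weight_joining_layered[OF \<alpha>(1) \<beta>(2)] by blast
  moreover obtain u u' where "\<alpha> u u' \<noteq> 0"
    using fully_supported_has_neighbour[OF \<alpha>(2)] by metis
  then have "layered \<alpha> f (u, v1) (u', v1) \<noteq> tensor \<alpha> \<beta> (u, v1) (u', v1)"
    using \<open>c > 0\<close> g_nonzero[of u] \<open>v1 \<noteq> v2\<close> unfolding layered_def tensor_def f_def e_def by simp
  ultimately show ?thesis
    unfolding strongly_disjoint_def by metis
qed

theorem connected_iff_strongly_disjoint_diagonal:
  fixes \<beta> :: "'b::finite \<Rightarrow> 'b \<Rightarrow> real" and v1 v2 :: 'b
  assumes "weight_fun \<alpha>" "fully_supported \<alpha>"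
    and "weight_fun \<beta>" "diagonal \<beta>" "fully_supported \<beta>" and "v1 \<noteq> v2"
  shows "graph_connected \<alpha> \<longleftrightarrow> strongly_disjoint \<alpha> \<beta>"
  using strongly_disjoint_if_connected[OF assms(1,2) _ assms(4,5)]
    not_strongly_disjoint_if_not_connected[OF assms(1,2) _ assms(3-6)] by blast

theorem proposition7p2:
  fixes \<alpha> :: "'u::finite \<Rightarrow> 'u \<Rightarrow> real"
  assumes "weight_fun \<alpha>" and "fully_supported \<alpha>"
  shows "(graph_connected \<alpha> \<longleftrightarrow> (\<exists>\<beta>. in_family_H \<beta> \<and> strongly_disjoint \<alpha> \<beta>))
       \<and> ((\<exists>\<beta>. in_family_H \<beta> \<and> strongly_disjoint \<alpha> \<beta>) \<longleftrightarrow> (\<forall>\<beta>. in_family_H \<beta> \<longrightarrow> strongly_disjoint \<alpha> \<beta>))"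
proof -
  have "in_family_H (\<lambda>x y. if x = y then 1 / 2 else 0)"
    unfolding in_family_H_def weight_fun_def by (simp add: UNIV_bool)
  moreover have "graph_connected \<alpha> \<longleftrightarrow> strongly_disjoint \<alpha> \<beta>" if "in_family_H \<beta>" for \<beta>
    using connected_iff_strongly_disjoint_diagonal[OF assms, of \<beta> True False] that
    unfolding in_family_H_iff by blast
  ultimately show ?thesis
    by blast
qed

end
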